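(* Let $n \in \mathbb{N}$, let $X=\{x_1,\dots,x_m\}$ and $Y=\{y_1,\dots,y_m\}$ be disjoint vertex sets with $m=|X| = |Y| \geqslant n^2 + n$, and let $I \in \{0,1\}^4$. Then $M^<_I(X,Y)$ and $M^>_I(X,Y)$ each have at least $2^{n-1}$ distinct induced ordered subgraphs of order $n$.
   Context: Ordered graphs are graphs with a linear order on the vertices; induced ordered subgraphs are those induced by vertex subsets with the inherited order, and two are distinct if they are not order-isomorphic. For $I=(I_1,I_2,I_3,I_4)\in\{0,1\}^4$ and $x_1<\dots<x_m<y_1<\dots<y_m$, the ordered graph $M^<_I(X,Y)$ on $X\cup Y$ has edges: $x_ix_j$ ($i\neq j$) is an edge iff $I_1=1$; for $i<j$, $x_iy_j$ is an edge iff $I_2=1$; for $i>j$, $x_iy_j$ is an edge iff $I_3=1$; $y_iy_j$ ($i\neq j$) is an edge iff $I_4=1$; $x_iy_i$ is an edge iff $i$ is odd. The ordered graph $M^>_I(X,Y)$ is defined identically except that the vertices of $Y$ are ordered $x_1<\dots<x_m<y_m<\dots<y_1$ (i.e. $y_1>\dots>y_m$). *)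

theory Defs
  imports Main
begin

(* Ordered graphs: vertex set V :: nat set with the natural order of nat,
   adjacency E :: nat => nat => bool (symmetric, irreflexive). *)

definition ord_iso :: "(nat \<Rightarrow> nat \<Rightarrow> bool) \<Rightarrow> nat set \<Rightarrow> (nat \<Rightarrow> nat \<Rightarrow> bool) \<Rightarrow> nat set \<Rightarrow> bool" where
  "ord_iso E S E' S' \<longleftrightarrow> (\<exists>f. bij_betw f S S' \<and> strict_mono_on S f \<and>
       (\<forall>a\<in>S. \<forall>b\<in>S. E a b \<longleftrightarrow> E' (f a) (f b)))"

(* Adjacency of x_i and y_j (1-based indices). *)
definition xy_adj :: "bool \<Rightarrow> bool \<Rightarrow> nat \<Rightarrow> nat \<Rightarrow> bool" where
  "xy_adj I2 I3 i j = (if i < j then I2 else if j < i then I3 else odd i)"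

(* Vertex positions 0..<2m. Position p < m is x_{p+1}; position p >= m is y_{yidx p}. *)
definition yidx_lt :: "nat \<Rightarrow> nat \<Rightarrow> nat" where
  "yidx_lt m p = p - m + 1"          (* x_1<..<x_m<y_1<..<y_m *)

definition yidx_gt :: "nat \<Rightarrow> nat \<Rightarrow> nat" where
  "yidx_gt m p = 2 * m - p"          (* x_1<..<x_m<y_m<..<y_1 *)

definition M_edge :: "bool \<Rightarrow> bool \<Rightarrow> bool \<Rightarrow> bool \<Rightarrow> nat \<Rightarrow> (nat \<Rightarrow> nat) \<Rightarrow> nat \<Rightarrow> nat \<Rightarrow> bool" where
  "M_edge I1 I2 I3 I4 m yidx a b =
     (a \<noteq> b \<and> a < 2 * m \<and> b < 2 * m \<and>
      (if a < m \<and> b < m then I1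
       else if m \<le> a \<and> m \<le> b then I4
       else if a < m then xy_adj I2 I3 (a + 1) (yidx b)
       else xy_adj I2 I3 (b + 1) (yidx a)))"

definition M_lt :: "bool \<Rightarrow> bool \<Rightarrow> bool \<Rightarrow> bool \<Rightarrow> nat \<Rightarrow> nat \<Rightarrow> nat \<Rightarrow> bool" where
  "M_lt I1 I2 I3 I4 m = M_edge I1 I2 I3 I4 m (yidx_lt m)"

definition M_gt :: "bool \<Rightarrow> bool \<Rightarrow> bool \<Rightarrow> bool \<Rightarrow> nat \<Rightarrow> nat \<Rightarrow> nat \<Rightarrow> bool" where
  "M_gt I1 I2 I3 I4 m = M_edge I1 I2 I3 I4 m (yidx_gt m)"

definition many_induced :: "nat set \<Rightarrow> (nat \<Rightarrow> nat \<Rightarrow> bool) \<Rightarrow> nat \<Rightarrow> nat \<Rightarrow> bool" where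
  "many_induced V E n k \<longleftrightarrow> (\<exists>F. F \<subseteq> {S. S \<subseteq> V \<and> card S = n} \<and> finite F \<and> card F \<ge> k \<and>
       (\<forall>S\<in>F. \<forall>T\<in>F. S \<noteq> T \<longrightarrow> \<not> ord_iso E S E T))"

end

theory Submission
  imports Defs
begin

text \<open>
  For each index \<open>i < n\<close> choose one vertex, either \<open>x\<^sub>i\<close> or \<open>y\<^sub>i\<close> (for suitably spaced
  indices); the set \<open>W\<close> of indices where the y-vertex is chosen determines an \<open>n\<close>-vertex
  selection. All x-vertices precede all y-vertices, so an order isomorphism between two
  selections preserves ranks. If the selections have different numbers of x-vertices, the
  last x-vertex of the larger one is mapped to a y-vertex, together with a y-vertex to which
  its adjacency differs from the y-y adjacency \<open>I\<^sub>4\<close>; such a y-vertex exists once \<open>W\<close> contains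
  a fixed anchor index. If the numbers agree, the isomorphism matches x-vertices and
  y-vertices rank by rank; at the first index \<open>j \<in> V - W\<close> the pair \<open>x\<^bsub>l-1\<^esub> y\<^sub>l\<close>, where \<open>l\<close>
  is the next index of \<open>W\<close> after \<open>j\<close>, is then mapped to a pair \<open>x\<^sub>i y\<^sub>j\<close> with \<open>j < i\<close>, and these
  two pairs have opposite adjacency. So the \<open>2\<^bsup>n-1\<^esup>\<close> selections containing the anchor are
  pairwise non-isomorphic.
\<close>

definition rank :: "nat set \<Rightarrow> nat \<Rightarrow> nat" where
  "rank S s = card {t\<in>S. t < s}"

lemma rank_less_rank:
  assumes "finite S" "u \<in> S" "u < v"
  shows "rank S u < rank S v"
  unfolding rank_def using assms by (intro psubset_card_mono) auto

lemma rank_less_card: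
  assumes "finite S" "s \<in> S"
  shows "rank S s < card S"
  unfolding rank_def using assms by (intro psubset_card_mono) auto

lemma inj_on_rank:
  assumes "finite S"
  shows "inj_on (rank S) S"
  by (rule inj_onI) (metis assms rank_less_rank less_irrefl linorder_neqE_nat)

lemma rank_Max:
  assumes "finite S" "S \<noteq> {}"
  shows "rank S (Max S) = card S - 1"
proof -
  have "{t\<in>S. t < Max S} = S - {Max S}"
    using assms by (auto simp: order.strict_iff_order)
  then show ?thesis
    unfolding rank_def using assms by simp
qed

lemma rank_strict_mono_image:
  assumes f: "bij_betw f S T" "strict_mono_on S f" and s: "s \<in> S"
  shows "rank T (f s) = rank S s"
proof -
  have "{u\<in>T. u < f s} = f ` {t\<in>S. t < s}"
    using f s by (auto simp: bij_betw_def strict_mono_on_less)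
  moreover have "inj_on f {t\<in>S. t < s}"
    using f by (auto simp: bij_betw_def intro: inj_on_subset)
  ultimately show ?thesis
    unfolding rank_def by (simp add: card_image)
qed

lemma card_split_at:
  fixes A :: "nat set"
  assumes "finite A" "a \<in> A"
  shows "card A = card {b\<in>A. b < a} + Suc (card {b\<in>A. a < b})"
proof -
  have "A - {a} = {b\<in>A. b < a} \<union> {b\<in>A. a < b}"
    by auto
  moreover have "card (A - {a}) = card A - 1" "0 < card A"
    using assms by (auto simp: card_gt_0_iff)
  ultimately show ?thesis
    using assms(1) by (simp add: card_Un_disjoint disjoint_iff)
qed

lemma card_subsets_containing:
  assumes "finite A" "a \<in> A"
  shows "card {W. W \<subseteq> A \<and> a \<in> W} = 2 ^ (card A - 1)"
proof -
  have "{W. W \<subseteq> A \<and> a \<in> W} = insert a ` Pow (A - {a})"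
  proof (intro equalityI subsetI)
    fix W assume "W \<in> {W. W \<subseteq> A \<and> a \<in> W}"
    then have "W = insert a (W - {a})" "W - {a} \<in> Pow (A - {a})" by auto
    then show "W \<in> insert a ` Pow (A - {a})" by blast
  qed (use assms(2) in auto)
  moreover have "inj_on (insert a) (Pow (A - {a}))"
    by (rule inj_onI) (metis Diff_insert_absorb PowD insertCI subset_Diff_insert)
  ultimately show ?thesis
    using assms by (simp add: card_image card_Pow)
qed

lemma obtain_next_element:
  fixes W V :: "nat set"
  assumes "finite V" "card W = card V" "j \<in> V" "j \<notin> W"
    and below: "{i\<in>W. i < j} = {i\<in>V. i < j}"
  obtains l where "l \<in> W" "j < l" "{i\<in>W. i < l} = {i\<in>W. i < j}"
proof -
  have "\<exists>l\<in>W. j < l"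
  proof (rule ccontr)
    assume "\<not> (\<exists>l\<in>W. j < l)"
    then have "W = {i\<in>V. i < j}"
      using \<open>j \<notin> W\<close> below by (auto simp: not_less le_less)
    moreover have "card {i\<in>V. i < j} < card V"
      using assms(1,3) by (intro psubset_card_mono) auto
    ultimately show False
      using assms(2) by simp
  qed
  define l where "l = (LEAST l. l \<in> W \<and> j < l)"
  have "l \<in> W" "j < l"
    unfolding l_def using LeastI_ex[OF \<open>\<exists>l\<in>W. j < l\<close>[unfolded Bex_def]] by auto
  moreover have "{i\<in>W. i < l} = {i\<in>W. i < j}"
    using \<open>j \<notin> W\<close> \<open>j < l\<close> not_less_Least[of _ "\<lambda>l. l \<in> W \<and> j < l"]
    unfolding l_def by (auto simp: not_less) (metis le_neq_implies_less)
  ultimately show ?thesis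
    using that by blast
qed

lemma ord_iso_refl: "ord_iso E S E S"
  unfolding ord_iso_def by (rule exI[of _ id]) (auto intro: strict_mono_onI)

lemma ord_iso_sym:
  assumes "ord_iso E S E' T"
  shows "ord_iso E' T E S"
proof -
  obtain f where f: "bij_betw f S T" "strict_mono_on S f"
    and edges: "\<forall>a\<in>S. \<forall>b\<in>S. E a b \<longleftrightarrow> E' (f a) (f b)"
    using assms unfolding ord_iso_def by blast
  define g where "g = the_inv_into S f"
  have g: "bij_betw g T S"
    unfolding g_def by (rule bij_betw_the_inv_into[OF f(1)])
  have fg: "f (g u) = u" if "u \<in> T" for u
    unfolding g_def using f_the_inv_into_f_bij_betw[OF f(1) that] .
  have "strict_mono_on T g"
  proof (rule strict_mono_onI)
    fix u v assume "u \<in> T" "v \<in> T" "u < v"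
    then show "g u < g v"
      using strict_mono_on_less[OF f(2)] bij_betw_apply[OF g] fg by metis
  qed
  moreover have "\<forall>a\<in>T. \<forall>b\<in>T. E' a b \<longleftrightarrow> E (g a) (g b)"
    using edges bij_betw_apply[OF g] fg by metis
  ultimately show ?thesis
    using g unfolding ord_iso_def by blast
qed

lemma many_induced_single:
  assumes "n \<le> card V"
  shows "many_induced V E n 1"
proof -
  obtain S where "S \<subseteq> V" "card S = n"
    using obtain_subset_with_card_n[OF assms] by blast
  then show ?thesis
    unfolding many_induced_def by (intro exI[of _ "{S}"]) auto
qed

lemma many_induced_family:
  assumes "finite F" and sub: "\<And>W. W \<in> F \<Longrightarrow> S W \<subseteq> V \<and> card (S W) = n"
    and noniso: "\<And>W W'. W \<in> F \<Longrightarrow> W' \<in> F \<Longrightarrow> W \<noteq> W' \<Longrightarrow> \<not> ord_iso E (S W) E (S W')"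
  shows "many_induced V E n (card F)"
proof -
  have "inj_on S F"
    using noniso ord_iso_refl by (metis inj_onI)
  then show ?thesis
    unfolding many_induced_def using assms
    by (intro exI[of _ "S ` F"]) (auto simp: card_image)
qed

text \<open>
  \<open>xp i\<close> and \<open>yp l\<close> are the positions of the vertices playing the roles of \<open>x\<^sub>i\<close> and \<open>y\<^sub>l\<close>
  above; \<open>descending\<close> distinguishes the order of \<open>Y\<close> in \<open>M\<^sup>>\<close> from that in \<open>M\<^sup><\<close>.
\<close>

locale xy_selection =
  fixes n m :: nat and xp yp :: "nat \<Rightarrow> nat" and E :: "nat \<Rightarrow> nat \<Rightarrow> bool"
    and I3 I4 descending :: bool
  assumes n_pos: "0 < n"
    and xp_strict_mono: "strict_mono xp"
    and xp_below: "\<And>i. i < n \<Longrightarrow> xp i < m"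
    and yp_above: "\<And>l. l < n \<Longrightarrow> m \<le> yp l"
    and yp_bound: "\<And>l. l < n \<Longrightarrow> yp l < 2 * m"
    and yp_ascending: "\<And>l l'. \<not> descending \<Longrightarrow> l < l' \<Longrightarrow> l' < n \<Longrightarrow> yp l < yp l'"
    and yp_descending: "\<And>l l'. descending \<Longrightarrow> l < l' \<Longrightarrow> l' < n \<Longrightarrow> yp l' < yp l"
    and edge_yy: "\<And>l l'. l < n \<Longrightarrow> l' < n \<Longrightarrow> l \<noteq> l' \<Longrightarrow> E (yp l) (yp l') = I4"
    and edge_diagonal: "\<And>l. 0 < l \<Longrightarrow> l < n \<Longrightarrow> E (xp (l - 1)) (yp l) = (\<not> I3)"
    and edge_below: "\<And>i j. j \<le> i \<Longrightarrow> i < n \<Longrightarrow> E (xp i) (yp j) = I3"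
begin

definition x_indices :: "nat set \<Rightarrow> nat set" where
  "x_indices W = {..<n} - W"

definition selection :: "nat set \<Rightarrow> nat set" where
  "selection W = xp ` x_indices W \<union> yp ` W"

definition anchor :: nat where
  "anchor = (if I4 = I3 then n - 1 else 0)"

lemma anchor_less: "anchor < n"
  using n_pos unfolding anchor_def by simp

lemma yp_less_iff:
  assumes "l < n" "l' < n"
  shows "yp l' < yp l \<longleftrightarrow> (if descending then l < l' else l' < l)"
  using assms yp_ascending yp_descending by (metis less_asym linorder_neqE_nat less_irrefl)

lemma inj_on_yp: "inj_on yp {..<n}"
proof (rule inj_onI)
  fix l l' assume "l \<in> {..<n}" "l' \<in> {..<n}" "yp l = yp l'"
  then show "l = l'"
    using yp_less_iff[of l l'] yp_less_iff[of l' l] by (auto split: if_splits)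
qed

lemma xp_less_yp: "i < n \<Longrightarrow> l < n \<Longrightarrow> xp i < yp l"
  using xp_below yp_above less_le_trans by blast

context
  fixes W assumes W: "W \<subseteq> {..<n}"
begin

lemma finite_selection: "finite (selection W)"
  using W finite_subset unfolding selection_def x_indices_def by blast

lemma card_x_indices: "card (x_indices W) = n - card W"
  unfolding x_indices_def using W by (simp add: card_Diff_subset finite_subset)

lemma card_selection: "card (selection W) = n"
proof -
  have "xp ` x_indices W \<inter> yp ` W = {}"
    using W xp_less_yp unfolding x_indices_def by (fastforce simp: less_irrefl)
  then have "card (selection W) = card (x_indices W) + card W"
    unfolding selection_def using W inj_on_yp strict_mono_imp_inj_on[OF xp_strict_mono]
    by (simp add: card_Un_disjoint card_image finite_subset inj_on_subset x_indices_def)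
  then show ?thesis
    using W card_x_indices by (metis card_lessThan card_mono finite_lessThan le_add_diff_inverse2)
qed

lemma selection_subset: "selection W \<subseteq> {0..<2 * m}"
  unfolding selection_def x_indices_def using W xp_below yp_bound by fastforce

lemma rank_selection_xp:
  assumes "i \<in> x_indices W"
  shows "rank (selection W) (xp i) = rank (x_indices W) i"
proof -
  have "{t\<in>selection W. t < xp i} = xp ` {i'\<in>x_indices W. i' < i}"
    using assms W xp_less_yp unfolding selection_def x_indices_def
    by (auto simp: strict_mono_less[OF xp_strict_mono]) (metis W lessThan_iff less_asym subsetD)
  then show ?thesis
    unfolding rank_def
    by (simp add: card_image inj_on_subset strict_mono_imp_inj_on[OF xp_strict_mono])
qed

lemma rank_selection_yp:
  assumes "l \<in> W"
  shows "rank (selection W) (yp l) = card (x_indices W) + card {l'\<in>W. yp l' < yp l}"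
proof -
  have "{t\<in>selection W. t < yp l} = xp ` x_indices W \<union> yp ` {l'\<in>W. yp l' < yp l}"
    using assms W xp_less_yp unfolding selection_def x_indices_def by auto
  moreover have "xp ` x_indices W \<inter> yp ` {l'\<in>W. yp l' < yp l} = {}"
    using W xp_less_yp unfolding x_indices_def by (fastforce simp: less_irrefl)
  moreover have "inj_on yp {l'\<in>W. yp l' < yp l}"
    using W inj_on_yp by (auto intro: inj_on_subset)
  ultimately show ?thesis
    unfolding rank_def using W
    by (simp add: card_Un_disjoint card_image finite_subset inj_on_subset x_indices_def
        strict_mono_imp_inj_on[OF xp_strict_mono])
qed

lemma selection_cases:
  assumes "t \<in> selection W"
  obtains (x) i where "i \<in> x_indices W" "t = xp i" "rank (selection W) t < card (x_indices W)"
  | (y) l where "l \<in> W" "t = yp l" "card (x_indices W) \<le> rank (selection W) t"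
  using assms rank_selection_xp rank_selection_yp rank_less_card[of "x_indices W"]
  unfolding selection_def x_indices_def by fastforce

end

lemma anchor_witness:
  assumes "anchor \<in> W" and j: "j \<in> x_indices W" "\<forall>i\<in>x_indices W. i \<le> j"
  obtains u where "u \<in> W" "E (xp j) (yp u) \<noteq> I4"
proof (cases "I4 = I3")
  case True
  then have "n - 1 \<in> W"
    using assms(1) unfolding anchor_def by simp
  moreover have "j < n" "j \<notin> W"
    using j(1) unfolding x_indices_def by auto
  ultimately have "j + 1 < n"
    by (cases "j = n - 1") auto
  then have "j + 1 \<in> W"
    using j(2) unfolding x_indices_def by force
  moreover have "E (xp j) (yp (j + 1)) = (\<not> I3)"
    using edge_diagonal[of "j + 1"] \<open>j + 1 < n\<close> by simp
  ultimately show ?thesis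
    using that True by auto
next
  case False
  then have "0 \<in> W"
    using assms(1) unfolding anchor_def by simp
  moreover have "E (xp j) (yp 0) = I3"
    using edge_below[of 0 j] j unfolding x_indices_def by simp
  ultimately show ?thesis
    using that False by auto
qed

lemma strict_mono_bij_selection_yp_image:
  assumes V: "V \<subseteq> {..<n}"
    and f: "bij_betw f S (selection V)" "strict_mono_on S f"
    and "s \<in> S" and rank_ge: "card (x_indices V) \<le> rank S s"
  shows "f s \<in> yp ` V"
proof -
  have "f s \<in> selection V" "rank (selection V) (f s) = rank S s"
    using f \<open>s \<in> S\<close> by (auto simp: bij_betw_apply rank_strict_mono_image)
  then show ?thesis
    using rank_ge by (cases rule: selection_cases[OF V]) auto
qed

lemma not_ord_iso_of_card_x_indices_less:
  assumes W: "W \<subseteq> {..<n}" "anchor \<in> W" and V: "V \<subseteq> {..<n}"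
    and less: "card (x_indices V) < card (x_indices W)"
  shows "\<not> ord_iso E (selection W) E (selection V)"
proof
  assume "ord_iso E (selection W) E (selection V)"
  then obtain f where f: "bij_betw f (selection W) (selection V)" "strict_mono_on (selection W) f"
    and edges: "\<forall>a\<in>selection W. \<forall>b\<in>selection W. E a b \<longleftrightarrow> E (f a) (f b)"
    unfolding ord_iso_def by blast
  define j where "j = Max (x_indices W)"
  have fin: "finite (x_indices W)"
    unfolding x_indices_def by simp
  have ne: "x_indices W \<noteq> {}"
    using less by (metis card.empty less_nat_zero_code)
  have j: "j \<in> x_indices W" "\<forall>i\<in>x_indices W. i \<le> j"
    unfolding j_def using fin ne by simp_all
  obtain u where u: "u \<in> W" "E (xp j) (yp u) \<noteq> I4"
    using anchor_witness[OF W(2) j] .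
  have xj: "xp j \<in> selection W" and yu: "yp u \<in> selection W"
    using j u unfolding selection_def by auto
  have "rank (selection W) (xp j) = card (x_indices W) - 1"
    using rank_selection_xp[OF W(1) j(1)] rank_Max[OF fin ne] unfolding j_def by simp
  then obtain l1 where l1: "l1 \<in> V" "f (xp j) = yp l1"
    using strict_mono_bij_selection_yp_image[OF V f xj] less by fastforce
  obtain l2 where l2: "l2 \<in> V" "f (yp u) = yp l2"
    using strict_mono_bij_selection_yp_image[OF V f yu] rank_selection_yp[OF W(1) u(1)] less by fastforce
  have "xp j \<noteq> yp u"
    using xp_less_yp[of j u] j(1) u(1) W(1) unfolding x_indices_def by auto
  then have "l1 \<noteq> l2"
    using l1 l2 f xj yu by (metis bij_betw_def inj_onD)
  then have "E (f (xp j)) (f (yp u)) = I4"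
    using edge_yy l1 l2 V by auto
  moreover have "E (xp j) (yp u) = E (f (xp j)) (f (yp u))"
    using edges xj yu by blast
  ultimately show False
    using u(2) by simp
qed

lemma card_yp_below_eq:
  assumes W: "W \<subseteq> {..<n}" and V: "V \<subseteq> {..<n}" and "card W = card V"
    and "l \<in> W" "j \<in> V" and below: "{i\<in>W. i < l} = {i\<in>V. i < j}"
  shows "card {l'\<in>W. yp l' < yp l} = card {l'\<in>V. yp l' < yp j}"
proof (cases descending)
  case False
  have "{l'\<in>W. yp l' < yp l} = {l'\<in>W. l' < l}" "{l'\<in>V. yp l' < yp j} = {l'\<in>V. l' < j}"
    using W V \<open>l \<in> W\<close> \<open>j \<in> V\<close> False by (auto simp: yp_less_iff subset_eq)
  then show ?thesis
    using below by simp
next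
  case True
  have "{l'\<in>W. yp l' < yp l} = {l'\<in>W. l < l'}" "{l'\<in>V. yp l' < yp j} = {l'\<in>V. j < l'}"
    using W V \<open>l \<in> W\<close> \<open>j \<in> V\<close> True by (auto simp: yp_less_iff subset_eq)
  moreover have "finite W" "finite V"
    using W V finite_subset by auto
  ultimately show ?thesis
    using card_split_at[of W l] card_split_at[of V j] assms by simp
qed

lemma strict_mono_bij_selection_xp:
  assumes W: "W \<subseteq> {..<n}" and V: "V \<subseteq> {..<n}"
    and f: "bij_betw f (selection W) (selection V)" "strict_mono_on (selection W) f"
    and same_x_card: "card (x_indices W) = card (x_indices V)" and i: "i \<in> x_indices W"
  obtains i' where "i' \<in> x_indices V" "f (xp i) = xp i'"
    "rank (x_indices V) i' = rank (x_indices W) i"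
proof -
  have xi: "xp i \<in> selection W"
    using i unfolding selection_def by simp
  have rank_fi: "rank (selection V) (f (xp i)) = rank (x_indices W) i"
    using rank_strict_mono_image[OF f xi] rank_selection_xp[OF W i] by simp
  moreover have "rank (x_indices W) i < card (x_indices V)"
    using rank_less_card[of "x_indices W"] i same_x_card by (simp add: x_indices_def)
  ultimately show ?thesis
    using that rank_selection_xp[OF V]
    by (cases rule: selection_cases[OF V bij_betw_apply[OF f(1) xi]]) auto
qed

lemma strict_mono_bij_selection_yp:
  assumes W: "W \<subseteq> {..<n}" and V: "V \<subseteq> {..<n}"
    and f: "bij_betw f (selection W) (selection V)" "strict_mono_on (selection W) f"
    and same_x_card: "card (x_indices W) = card (x_indices V)" and "l \<in> W" "j \<in> V"
    and same_y_rank: "card {l'\<in>W. yp l' < yp l} = card {l'\<in>V. yp l' < yp j}"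
  shows "f (yp l) = yp j"
proof (rule inj_onD[OF inj_on_rank[OF finite_selection[OF V]]])
  have yl: "yp l \<in> selection W"
    using \<open>l \<in> W\<close> unfolding selection_def by simp
  then show "rank (selection V) (f (yp l)) = rank (selection V) (yp j)"
    using rank_strict_mono_image[OF f yl] rank_selection_yp[OF W \<open>l \<in> W\<close>]
      rank_selection_yp[OF V \<open>j \<in> V\<close>] same_x_card same_y_rank by simp
  show "f (yp l) \<in> selection V"
    using bij_betw_apply[OF f(1) yl] .
  show "yp j \<in> selection V"
    using \<open>j \<in> V\<close> unfolding selection_def by simp
qed

lemma not_ord_iso_at_first_difference:
  assumes W: "W \<subseteq> {..<n}" and V: "V \<subseteq> {..<n}" and same_card: "card W = card V"
    and j: "j \<in> V" "j \<notin> W" and agree: "\<And>i. i < j \<Longrightarrow> i \<in> W \<longleftrightarrow> i \<in> V"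
  shows "\<not> ord_iso E (selection W) E (selection V)"
proof
  assume "ord_iso E (selection W) E (selection V)"
  then obtain f where f: "bij_betw f (selection W) (selection V)" "strict_mono_on (selection W) f"
    and edges: "\<forall>a\<in>selection W. \<forall>b\<in>selection W. E a b \<longleftrightarrow> E (f a) (f b)"
    unfolding ord_iso_def by blast
  have same_x_card: "card (x_indices W) = card (x_indices V)"
    using card_x_indices[OF W] card_x_indices[OF V] same_card by simp
  have below_j: "{i\<in>W. i < j} = {i\<in>V. i < j}"
    using agree by auto
  obtain l where l: "l \<in> W" "j < l" and below_l: "{i\<in>W. i < l} = {i\<in>W. i < j}"
    using obtain_next_element[OF finite_subset[OF V finite_lessThan] same_card j below_j] .
  have "l < n"
    using l W by auto
  have fyl: "f (yp l) = yp j"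
    using strict_mono_bij_selection_yp[OF W V f same_x_card l(1) j(1)]
      card_yp_below_eq[OF W V same_card l(1) j(1)] below_l below_j by simp
  have "l - 1 \<notin> W"
  proof
    assume "l - 1 \<in> W"
    then have "l - 1 \<in> {i\<in>W. i < l}"
      using l(2) by simp
    then have "l - 1 < j"
      unfolding below_l by simp
    then show False
      using l(2) by simp
  qed
  then have prev: "l - 1 \<in> x_indices W"
    using \<open>l < n\<close> unfolding x_indices_def by simp
  obtain i where i: "i \<in> x_indices V" "f (xp (l - 1)) = xp i"
    and rank_i: "rank (x_indices V) i = rank (x_indices W) (l - 1)"
    using strict_mono_bij_selection_xp[OF W V f same_x_card prev] .
  have "j < i"
  proof (rule ccontr)
    assume "\<not> j < i"
    moreover have "i \<noteq> j"
      using i j unfolding x_indices_def by auto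
    ultimately have "i < j"
      by simp
    then have "i \<in> x_indices W" "rank (x_indices V) i = rank (x_indices W) i"
      using i agree unfolding x_indices_def rank_def by (auto intro!: arg_cong[where f = card])
    moreover have "i < l - 1"
      using \<open>i < j\<close> l by simp
    ultimately show False
      using rank_i rank_less_rank[of "x_indices W" i "l - 1"] by (simp add: x_indices_def)
  qed
  have "E (xp (l - 1)) (yp l) = (\<not> I3)"
    using edge_diagonal l \<open>l < n\<close> by simp
  moreover have "E (xp i) (yp j) = I3"
    using edge_below \<open>j < i\<close> i unfolding x_indices_def by simp
  moreover have "E (xp (l - 1)) (yp l) = E (f (xp (l - 1))) (f (yp l))"
    using edges prev l(1) unfolding selection_def by blast
  ultimately show False
    using i(2) fyl by simp
qed

lemma not_ord_iso_selection:
  assumes W: "W \<subseteq> {..<n}" "anchor \<in> W" and V: "V \<subseteq> {..<n}" "anchor \<in> V"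
    and "W \<noteq> V"
  shows "\<not> ord_iso E (selection W) E (selection V)"
proof (cases "card (x_indices W)" "card (x_indices V)" rule: linorder_cases)
  case less
  then show ?thesis
    using not_ord_iso_of_card_x_indices_less[OF V W(1)] ord_iso_sym by blast
next
  case greater
  then show ?thesis
    using not_ord_iso_of_card_x_indices_less[OF W V(1)] by blast
next
  case equal
  then have same_card: "card W = card V"
    using card_x_indices[OF W(1)] card_x_indices[OF V(1)] W(1) V(1)
    by (metis card_lessThan card_mono diff_diff_cancel finite_lessThan)
  define D where "D = (W - V) \<union> (V - W)"
  have "finite D"
    unfolding D_def using finite_subset[OF W(1)] finite_subset[OF V(1)] by simp
  have "D \<noteq> {}"
    unfolding D_def using \<open>W \<noteq> V\<close> by auto
  define j where "j = Min D"
  have "j \<in> D"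
    unfolding j_def using \<open>finite D\<close> \<open>D \<noteq> {}\<close> by simp
  have agree: "i \<in> W \<longleftrightarrow> i \<in> V" if "i < j" for i
    using that Min_le[OF \<open>finite D\<close>, of i] unfolding j_def D_def by auto
  show ?thesis
  proof (cases "j \<in> V")
    case True
    then show ?thesis
      using not_ord_iso_at_first_difference[OF W(1) V(1) same_card True] \<open>j \<in> D\<close> agree
      unfolding D_def by blast
  next
    case False
    then show ?thesis
      using not_ord_iso_at_first_difference[OF V(1) W(1) same_card[symmetric]] \<open>j \<in> D\<close> agree
        ord_iso_sym unfolding D_def by blast
  qed
qed

theorem many_induced_selections: "many_induced {0..<2 * m} E n (2 ^ (n - 1))"
proof -
  have "card {W. W \<subseteq> {..<n} \<and> anchor \<in> W} = 2 ^ (n - 1)"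
    using card_subsets_containing[of "{..<n}" anchor] anchor_less by simp
  then show ?thesis
    using many_induced_family[of "{W. W \<subseteq> {..<n} \<and> anchor \<in> W}" selection "{0..<2 * m}" n E]
      selection_subset card_selection not_ord_iso_selection by auto
qed

end

text \<open>
  Position \<open>2i + 2 + e\<close> is the vertex \<open>x\<^bsub>2i+3+e\<^esub>\<close> and the chosen y-vertices are
  \<open>y\<^bsub>2l+1+e\<^esub>\<close>; with \<open>e = 1\<close> iff \<open>I\<^sub>3\<close>, the matching pair \<open>x\<^bsub>2l+1+e\<^esub> y\<^bsub>2l+1+e\<^esub>\<close>
  is an edge iff \<open>\<not> I\<^sub>3\<close>.
\<close>

lemma many_induced_M_lt:
  assumes "0 < n" "2 * n + 2 \<le> m"
  shows "many_induced {0..<2 * m} (M_lt I1 I2 I3 I4 m) n (2 ^ (n - 1))"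
proof -
  define e :: nat where "e = (if I3 then 1 else 0)"
  interpret xy_selection n m "\<lambda>i. 2 * i + 2 + e" "\<lambda>l. m + 2 * l + e" "M_lt I1 I2 I3 I4 m"
    I3 I4 False
  proof
    fix l assume "0 < l" "l < n"
    then show "M_lt I1 I2 I3 I4 m (2 * (l - 1) + 2 + e) (m + 2 * l + e) = (\<not> I3)"
      using assms unfolding M_lt_def M_edge_def xy_adj_def yidx_lt_def e_def by auto
  qed (use assms in \<open>auto simp: strict_mono_def M_lt_def M_edge_def xy_adj_def yidx_lt_def e_def\<close>)
  show ?thesis
    by (rule many_induced_selections)
qed

lemma many_induced_M_gt:
  assumes "0 < n" "2 * n + 2 \<le> m"
  shows "many_induced {0..<2 * m} (M_gt I1 I2 I3 I4 m) n (2 ^ (n - 1))"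
proof -
  define e :: nat where "e = (if I3 then 1 else 0)"
  interpret xy_selection n m "\<lambda>i. 2 * i + 2 + e" "\<lambda>l. 2 * m - 2 * l - 1 - e" "M_gt I1 I2 I3 I4 m"
    I3 I4 True
  proof
    fix l assume "0 < l" "l < n"
    then show "M_gt I1 I2 I3 I4 m (2 * (l - 1) + 2 + e) (2 * m - 2 * l - 1 - e) = (\<not> I3)"
      using assms unfolding M_gt_def M_edge_def xy_adj_def yidx_gt_def e_def by auto
  qed (use assms in \<open>auto simp: strict_mono_def M_gt_def M_edge_def xy_adj_def yidx_gt_def e_def\<close>)
  show ?thesis
    by (rule many_induced_selections)
qed

theorem lemma4:
  fixes n m :: nat and I1 I2 I3 I4 :: bool
  assumes "m \<ge> n ^ 2 + n"
  shows "many_induced {0..<2 * m} (M_lt I1 I2 I3 I4 m) n (2 ^ (n - 1))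
       \<and> many_induced {0..<2 * m} (M_gt I1 I2 I3 I4 m) n (2 ^ (n - 1))"
proof (cases "n \<le> 1")
  case True
  then have "2 ^ (n - 1) = (1::nat)" and "n \<le> card {0..<2 * m}"
    using assms by auto
  then show ?thesis
    using many_induced_single by metis
next
  case False
  then have "2 * n \<le> n ^ 2"
    by (simp add: power2_eq_square)
  then have "2 * n + 2 \<le> m"
    using False assms by linarith
  then show ?thesis
    using False many_induced_M_lt many_induced_M_gt by simp
qed

end
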